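(* Let $f^u_1,f^u_2$ be maps with $f^u_i(x)\in\mathcal U(x)$ for all $x\in\mathcal X$, $i=1,2$, and let $\hat J_{i,1}\subseteq\hat J_{i,2}\subseteq J=\{1,\dots,n_u+m_u\}$ for $i=1,2$. For $\hat J\subseteq J$ let $\mathcal U^{f^u_i}(x|u_{\hat J})=\mathcal U(x)\cap\{u: u_j=f^u_i(x)_j\ \forall j\in\hat J\}$. Then $w_R\le w\big(\cdot,\ \mathcal U^{f^u_1}(\cdot|u_{\hat J_{1,2}})\cup\mathcal U^{f^u_2}(\cdot|u_{\hat J_{2,2}}),\ \cdot\big)\le w\big(\cdot,\ \mathcal U^{f^u_1}(\cdot|u_{\hat J_{1,1}})\cup\mathcal U^{f^u_2}(\cdot|u_{\hat J_{2,1}}),\ \cdot\big)\le w^*$.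
   Context: Let $\mathcal X=\{x\in\mathbb R^{n_x}_+\times\mathbb Z^{m_x}_+: Ax\ge b\}$. For each $x$ let $\mathcal U(x)=\{u=(u_c,u_d)\in\mathbb R^{n_u}_+\times\mathbb U_d: F_c(x)u_c+F_d(x)u_d\le h+Gx\}$ and $\mathcal Y(x,u)=\{y=(y_c,y_d)\in\mathbb R^{n_y}_+\times\mathbb Y_d: B_{2,c}y_c+B_{2,d}y_d\ge d-B_1x-E_cu_c-E_du_d\}$, where $\mathbb U_d\subseteq\mathbb Z^{m_u}_+$, $\mathbb Y_d\subseteq\mathbb Z^{m_y}_+$ are bounded, $F_c(x),F_d(x)$ depend on $x$, other data fixed, $c_1,c_2$ row vectors. Components of $u$ are indexed by $J=\{1,\dots,n_u+m_u\}$. For a point-to-set map $\mathcal U'(\cdot)$, $w(\cdot,\mathcal U',\cdot)=\min_{x\in\mathcal X}\big[c_1x+\max_{u\in\mathcal U'(x)}\min_{y\in\mathcal Y(x,u)}c_2y\big]$ (minimum over empty set $=+\infty$); $w^*=w(\cdot,\mathcal U,\cdot)$; $w_R=\min\{c_1x+c_2y: x\in\mathcal X,u\in\mathcal U(x),y\in\mathcal Y(x,u)\}$. Standing assumptions: $\mathcal U(x)\neq\emptyset$ and bounded for all $x\in\mathcal X$, and $w_R>-\infty$. *)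

theory Defs
  imports "HOL-Analysis.Analysis"
begin

text \<open>Vectors: a variable with a continuous and an integer block is a pair
  (continuous part, integer part) of Cartesian vectors. Linear maps acting on such
  a pair are given blockwise by two matrices. Row vectors are vectors used with
  the inner product.\<close>

definition nonneg_vec :: "real^'n \<Rightarrow> bool" where
  "nonneg_vec v \<longleftrightarrow> (\<forall>i. 0 \<le> v $ i)"

definition nonneg_int_vec :: "real^'n \<Rightarrow> bool" where
  "nonneg_int_vec v \<longleftrightarrow> (\<forall>i. v $ i \<in> \<int> \<and> 0 \<le> v $ i)"

definition Xset :: "real^'nx^'r \<Rightarrow> real^'mx^'r \<Rightarrow> real^'r \<Rightarrow> ((real^'nx) \<times> (real^'mx)) set" where
  "Xset Ac Ad b = {(xc, xd). nonneg_vec xc \<and> nonneg_int_vec xd \<and>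
      (\<forall>k. b $ k \<le> (Ac *v xc + Ad *v xd) $ k)}"

definition Uset :: "((real^'nx) \<times> (real^'mx) \<Rightarrow> real^'nu^'p) \<Rightarrow> ((real^'nx) \<times> (real^'mx) \<Rightarrow> real^'mu^'p)
    \<Rightarrow> (real^'mu) set \<Rightarrow> real^'p \<Rightarrow> real^'nx^'p \<Rightarrow> real^'mx^'p
    \<Rightarrow> (real^'nx) \<times> (real^'mx) \<Rightarrow> ((real^'nu) \<times> (real^'mu)) set" where
  "Uset Fc Fd Ud h Gc Gd x = {(uc, ud). nonneg_vec uc \<and> ud \<in> Ud \<and>
      (\<forall>k. (Fc x *v uc + Fd x *v ud) $ k \<le> (h + Gc *v fst x + Gd *v snd x) $ k)}"

definition Yset :: "real^'ny^'q \<Rightarrow> real^'my^'q \<Rightarrow> (real^'my) set \<Rightarrow> real^'q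
    \<Rightarrow> real^'nx^'q \<Rightarrow> real^'mx^'q \<Rightarrow> real^'nu^'q \<Rightarrow> real^'mu^'q
    \<Rightarrow> (real^'nx) \<times> (real^'mx) \<Rightarrow> (real^'nu) \<times> (real^'mu) \<Rightarrow> ((real^'ny) \<times> (real^'my)) set" where
  "Yset B2c B2d Yd d B1c B1d Ec Ed x u = {(yc, yd). nonneg_vec yc \<and> yd \<in> Yd \<and>
      (\<forall>k. (d - B1c *v fst x - B1d *v snd x - Ec *v fst u - Ed *v snd u) $ k
            \<le> (B2c *v yc + B2d *v yd) $ k)}"

definition linobj :: "real^'n \<Rightarrow> real^'m \<Rightarrow> (real^'n) \<times> (real^'m) \<Rightarrow> real" where
  "linobj cc cd v = cc \<bullet> fst v + cd \<bullet> snd v"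

text \<open>w(., U', .) = min_{x in X} [c1 x + max_{u in U'(x)} min_{y in Y(x,u)} c2 y],
  with values in the extended reals (min over the empty set = +infinity).\<close>
definition wval :: "'x set \<Rightarrow> ('x \<Rightarrow> 'u \<Rightarrow> 'y set) \<Rightarrow> ('x \<Rightarrow> real) \<Rightarrow> ('y \<Rightarrow> real)
    \<Rightarrow> ('x \<Rightarrow> 'u set) \<Rightarrow> ereal" where
  "wval X Y c1 c2 U' = (INF x\<in>X. ereal (c1 x) + (SUP u\<in>U' x. INF y\<in>Y x u. ereal (c2 y)))"

definition wR :: "'x set \<Rightarrow> ('x \<Rightarrow> 'u set) \<Rightarrow> ('x \<Rightarrow> 'u \<Rightarrow> 'y set) \<Rightarrow> ('x \<Rightarrow> real) \<Rightarrow> ('y \<Rightarrow> real) \<Rightarrow> ereal" where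
  "wR X U Y c1 c2 = (INF x\<in>X. INF u\<in>U x. INF y\<in>Y x u. ereal (c1 x + c2 y))"

text \<open>Components of u = (uc, ud) indexed by J = (continuous indices) + (integer indices),
  i.e. J = {1,...,nu+mu}.\<close>
definition ucomp :: "(real^'nu) \<times> (real^'mu) \<Rightarrow> 'nu + 'mu \<Rightarrow> real" where
  "ucomp u j = (case j of Inl i \<Rightarrow> fst u $ i | Inr i \<Rightarrow> snd u $ i)"

definition Ufix :: "('x \<Rightarrow> ((real^'nu) \<times> (real^'mu)) set) \<Rightarrow> ('x \<Rightarrow> (real^'nu) \<times> (real^'mu))
    \<Rightarrow> ('nu + 'mu) set \<Rightarrow> 'x \<Rightarrow> ((real^'nu) \<times> (real^'mu)) set" where
  "Ufix U f Jh x = U x \<inter> {u. \<forall>j\<in>Jh. ucomp u j = ucomp (f x) j}"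

end

theory Submission
  imports Defs
begin

text \<open>Fixing more components of u only shrinks the uncertainty set, and w is monotone in
  the uncertainty set. The lower bound holds because each restricted set still contains the
  point f1(x) of U(x), over which the relaxation w_R also minimises. Only f1(x) \<in> U(x) is
  needed.\<close>

lemma Ufix_subset: "Ufix U f Jh x \<subseteq> U x"
  by (simp add: Ufix_def)

lemma Ufix_antimono: "Jh \<subseteq> Jh' \<Longrightarrow> Ufix U f Jh' x \<subseteq> Ufix U f Jh x"
  by (auto simp: Ufix_def)

lemma self_in_Ufix: "f x \<in> U x \<Longrightarrow> f x \<in> Ufix U f Jh x"
  by (simp add: Ufix_def)

lemma ereal_le_add_INF:
  fixes w :: ereal and c :: real
  assumes "\<And>y. y \<in> A \<Longrightarrow> w \<le> ereal (c + g y)"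
  shows "w \<le> ereal c + (INF y\<in>A. ereal (g y))"
proof (cases w)
  case (real r)
  have "ereal (r - c) \<le> (INF y\<in>A. ereal (g y))"
  proof (rule INF_greatest)
    fix y assume "y \<in> A"
    then show "ereal (r - c) \<le> ereal (g y)" using assms real by force
  qed
  then show ?thesis using real
    by (cases "INF y\<in>A. ereal (g y)") auto
next
  case PInf
  then have "A = {}" using assms by force
  then show ?thesis by (simp add: top_ereal_def)
qed simp

lemma wval_mono:
  assumes "\<And>x. x \<in> X \<Longrightarrow> U1 x \<subseteq> U2 x"
  shows "wval X Y c1 c2 U1 \<le> wval X Y c1 c2 U2"
  unfolding wval_def
proof (rule INF_mono)
  fix x assume x: "x \<in> X"
  have "(SUP u\<in>U1 x. INF y\<in>Y x u. ereal (c2 y)) \<le> (SUP u\<in>U2 x. INF y\<in>Y x u. ereal (c2 y))"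
    using assms[OF x] by (rule SUP_subset_mono) simp
  then show "\<exists>x'\<in>X. ereal (c1 x') + (SUP u\<in>U1 x'. INF y\<in>Y x' u. ereal (c2 y))
                 \<le> ereal (c1 x) + (SUP u\<in>U2 x. INF y\<in>Y x u. ereal (c2 y))"
    using x by (intro bexI[of _ x] add_left_mono)
qed

lemma wR_le_wval:
  assumes "\<And>x. x \<in> X \<Longrightarrow> \<exists>u\<in>U' x. u \<in> U x"
  shows "wR X U Y c1 c2 \<le> wval X Y c1 c2 U'"
  unfolding wval_def
proof (rule INF_greatest)
  fix x assume x: "x \<in> X"
  obtain u where u: "u \<in> U' x" "u \<in> U x"
    using assms[OF x] by blast
  have "wR X U Y c1 c2 \<le> ereal (c1 x) + (INF y\<in>Y x u. ereal (c2 y))"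
  proof (rule ereal_le_add_INF)
    fix y assume "y \<in> Y x u"
    then show "wR X U Y c1 c2 \<le> ereal (c1 x + c2 y)"
      unfolding wR_def using x u by (intro INF_lower2[OF x] INF_lower2[of u] INF_lower)
  qed
  also have "\<dots> \<le> ereal (c1 x) + (SUP u\<in>U' x. INF y\<in>Y x u. ereal (c2 y))"
    using u by (intro add_left_mono SUP_upper)
  finally show "wR X U Y c1 c2 \<le> ereal (c1 x) + (SUP u\<in>U' x. INF y\<in>Y x u. ereal (c2 y))" .
qed

theorem corollary5:
  fixes Ac :: "real^'nx^'r" and Ad :: "real^'mx^'r" and b :: "real^'r"
    and Fc :: "(real^'nx) \<times> (real^'mx) \<Rightarrow> real^'nu^'p" and Fd :: "(real^'nx) \<times> (real^'mx) \<Rightarrow> real^'mu^'p"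
    and Ud :: "(real^'mu) set" and h :: "real^'p" and Gc :: "real^'nx^'p" and Gd :: "real^'mx^'p"
    and B2c :: "real^'ny^'q" and B2d :: "real^'my^'q" and Yd :: "(real^'my) set" and d :: "real^'q"
    and B1c :: "real^'nx^'q" and B1d :: "real^'mx^'q" and Ec :: "real^'nu^'q" and Ed :: "real^'mu^'q"
    and c1c :: "real^'nx" and c1d :: "real^'mx" and c2c :: "real^'ny" and c2d :: "real^'my"
    and f1 f2 :: "(real^'nx) \<times> (real^'mx) \<Rightarrow> (real^'nu) \<times> (real^'mu)"
    and J11 J12 J21 J22 :: "('nu + 'mu) set"
  defines "X \<equiv> Xset Ac Ad b"
    and "U \<equiv> Uset Fc Fd Ud h Gc Gd"
    and "Y \<equiv> Yset B2c B2d Yd d B1c B1d Ec Ed"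
    and "c1 \<equiv> linobj c1c c1d"
    and "c2 \<equiv> linobj c2c c2d"
  assumes Ud_int: "\<forall>v\<in>Ud. nonneg_int_vec v" and Ud_bdd: "bounded Ud"
    and Yd_int: "\<forall>v\<in>Yd. nonneg_int_vec v" and Yd_bdd: "bounded Yd"
    and U_ne: "\<forall>x\<in>X. U x \<noteq> {}" and U_bdd: "\<forall>x\<in>X. bounded (U x)"
    and wR_fin: "wR X U Y c1 c2 > -\<infinity>"
    and f1: "\<forall>x\<in>X. f1 x \<in> U x" and f2: "\<forall>x\<in>X. f2 x \<in> U x"
    and J1: "J11 \<subseteq> J12" and J2: "J21 \<subseteq> J22"
  shows "wR X U Y c1 c2 \<le> wval X Y c1 c2 (\<lambda>x. Ufix U f1 J12 x \<union> Ufix U f2 J22 x)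
       \<and> wval X Y c1 c2 (\<lambda>x. Ufix U f1 J12 x \<union> Ufix U f2 J22 x)
           \<le> wval X Y c1 c2 (\<lambda>x. Ufix U f1 J11 x \<union> Ufix U f2 J21 x)
       \<and> wval X Y c1 c2 (\<lambda>x. Ufix U f1 J11 x \<union> Ufix U f2 J21 x) \<le> wval X Y c1 c2 U"
proof (intro conjI)
  show "wR X U Y c1 c2 \<le> wval X Y c1 c2 (\<lambda>x. Ufix U f1 J12 x \<union> Ufix U f2 J22 x)"
    using f1 by (intro wR_le_wval) (blast intro: self_in_Ufix)
  show "wval X Y c1 c2 (\<lambda>x. Ufix U f1 J12 x \<union> Ufix U f2 J22 x)
      \<le> wval X Y c1 c2 (\<lambda>x. Ufix U f1 J11 x \<union> Ufix U f2 J21 x)"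
    by (intro wval_mono Un_mono Ufix_antimono J1 J2)
  show "wval X Y c1 c2 (\<lambda>x. Ufix U f1 J11 x \<union> Ufix U f2 J21 x) \<le> wval X Y c1 c2 U"
    by (intro wval_mono Un_least Ufix_subset)
qed

end
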